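(* Let $x,y$ be non-commuting indeterminates and $C=xyx^{-1}y^{-1}$. Let $(R_n)_{n\in\mathbb Z}$ satisfy $$R_{2n}CR_{2n-2}=1+R_{2n-1},\qquad R_{2n+1}CR_{2n-1}=1+R_{2n}^4\qquad(n\in\mathbb Z),$$ with $R_0=yxy^{-1}$ and $R_1=y$, and set $u_n=R_{2n}$. Let $$y_1=(1+y)x^{-1}yx^{-1}y^{-1},$$ $$y_2=\big(x^2+(1+y)x^{-2}(1+y)\big)y^{-1}x^{-1}yx^{-1}y^{-1},$$ $$y_3=\big(x^3+(1+y)x^{-1}\big)x^{-1}y^{-1}.$$ Then for every $n\ge0$, $u_nu_0^{-1}$ equals the sum over all Motzkin paths of height at most $1$ from $(0,0)$ to $(n,0)$ of their weights. Such a path is a sequence of points in $\mathbb Z\times\{0,1\}$ in which each step is $(a,h)\to(a+1,h)$ (horizontal) or $(a,h)\to(a+1,1-h)$ (up or down). The weight of a path is the product, in the order of the steps, of: - $y_1$ for each horizontal step at height $0$; - $1$ for each up step; - $y_2$ for each down step; - $y_3$ for each horizontal step at height $1$.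
   Context: Work in the free skew field (non-commutative rational functions) over $\mathbb C$ generated by $x,y$. *)

theory Defs
  imports Complex_Main
begin

text \<open>Noncommutative polynomials in two variables over the complex numbers:
  finitely supported coefficient functions on words over the alphabet {x,y}
  (False = x, True = y).\<close>

type_synonym ncword = "bool list"
type_synonym ncpoly = "ncword \<Rightarrow> complex"

definition is_ncpoly :: "ncpoly \<Rightarrow> bool" where
  "is_ncpoly p \<longleftrightarrow> finite {w. p w \<noteq> 0}"

definition ncmult :: "ncpoly \<Rightarrow> ncpoly \<Rightarrow> ncpoly" where
  "ncmult p q = (\<lambda>w. \<Sum>k\<le>length w. p (take k w) * q (drop k w))"

definition full_matrix :: "nat \<Rightarrow> (nat \<Rightarrow> nat \<Rightarrow> ncpoly) \<Rightarrow> bool" where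
  "full_matrix n A \<longleftrightarrow>
     \<not> (\<exists>r P Q. r < n \<and>
          (\<forall>i<n. \<forall>k<r. is_ncpoly (P i k)) \<and> (\<forall>k<r. \<forall>j<n. is_ncpoly (Q k j)) \<and>
          (\<forall>i<n. \<forall>j<n. A i j = (\<lambda>w. \<Sum>k<r. ncmult (P i k) (Q k j) w)))"

definition word_val :: "'a::ring_1 \<Rightarrow> 'a \<Rightarrow> ncword \<Rightarrow> 'a" where
  "word_val x y w = prod_list (map (\<lambda>b. if b then y else x) w)"

definition nceval :: "(complex \<Rightarrow> 'a::ring_1) \<Rightarrow> 'a \<Rightarrow> 'a \<Rightarrow> ncpoly \<Rightarrow> 'a" where
  "nceval \<iota> x y p = (\<Sum>w\<in>{w. p w \<noteq> 0}. \<iota> (p w) * word_val x y w)"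

definition invertible_over :: "nat \<Rightarrow> (nat \<Rightarrow> nat \<Rightarrow> 'a::ring_1) \<Rightarrow> bool" where
  "invertible_over n M \<longleftrightarrow> (\<exists>N.
      (\<forall>i<n. \<forall>j<n. (\<Sum>k<n. M i k * N k j) = (if i = j then 1 else 0)) \<and>
      (\<forall>i<n. \<forall>j<n. (\<Sum>k<n. N i k * M k j) = (if i = j then 1 else 0)))"

inductive_set division_closure :: "'a::division_ring set \<Rightarrow> 'a set" for S where
  gen: "a \<in> S \<Longrightarrow> a \<in> division_closure S"
| add: "a \<in> division_closure S \<Longrightarrow> b \<in> division_closure S \<Longrightarrow> a + b \<in> division_closure S"
| neg: "a \<in> division_closure S \<Longrightarrow> - a \<in> division_closure S"
| mult: "a \<in> division_closure S \<Longrightarrow> b \<in> division_closure S \<Longrightarrow> a * b \<in> division_closure S"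
| inv: "a \<in> division_closure S \<Longrightarrow> inverse a \<in> division_closure S"

text \<open>The division ring 'a, with the C-algebra structure given by the central ring
  homomorphism iota and elements x, y, is the free skew field C<(x,y)>:
  it is generated by C, x, y as a division ring, and (Cohn's characterisation of the
  universal field of fractions of the fir C<x,y>) every full matrix over the free
  algebra C<x,y> becomes invertible under evaluation.\<close>

definition free_skew_field :: "(complex \<Rightarrow> 'a::division_ring) \<Rightarrow> 'a \<Rightarrow> 'a \<Rightarrow> bool" where
  "free_skew_field \<iota> x y \<longleftrightarrow>
     (\<forall>a b. \<iota> (a + b) = \<iota> a + \<iota> b) \<and> (\<forall>a b. \<iota> (a * b) = \<iota> a * \<iota> b) \<and> \<iota> 1 = 1 \<and>
     (\<forall>a z. \<iota> a * z = z * \<iota> a) \<and>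
     division_closure (range \<iota> \<union> {x, y}) = UNIV \<and>
     (\<forall>n A. (\<forall>i<n. \<forall>j<n. is_ncpoly (A i j)) \<longrightarrow> full_matrix n A \<longrightarrow>
        invertible_over n (\<lambda>i j. nceval \<iota> x y (A i j)))"

text \<open>Motzkin paths of height at most 1 from (0,0) to (n,0), given by their list of
  heights h_0, ..., h_n.\<close>

definition motzkin1_paths :: "nat \<Rightarrow> nat list set" where
  "motzkin1_paths n = {h. length h = n + 1 \<and> set h \<subseteq> {0, 1} \<and> h ! 0 = 0 \<and> h ! n = 0}"

definition step_weight :: "'a \<Rightarrow> 'a \<Rightarrow> 'a \<Rightarrow> 'a \<Rightarrow> nat \<Rightarrow> nat \<Rightarrow> 'a" where
  "step_weight w00 w01 w10 w11 a b =
     (if a = 0 then (if b = 0 then w00 else w01) else (if b = 0 then w10 else w11))"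

definition path_weight :: "'a::monoid_mult \<Rightarrow> 'a \<Rightarrow> 'a \<Rightarrow> nat list \<Rightarrow> 'a" where
  "path_weight y1 y2 y3 h =
     prod_list (map (\<lambda>i. step_weight y1 1 y2 y3 (h ! i) (h ! (i + 1))) [0..<length h - 1])"

end

theory Submission
  imports Defs
begin

text \<open>In a free skew field \<open>C = x y x\<^sup>-\<^sup>1 y\<^sup>-\<^sup>1\<close> is not a scalar, since \<open>x y - c y x\<close> is a full
  \<open>1 \<times> 1\<close> matrix. This forces every \<open>R\<^sub>m\<close> to be nonzero: a vanishing term would make \<open>C\<close>
  a scalar, because the fourth roots of \<open>-1\<close> are scalars. Consecutive terms then twisted-commute,
  \<open>R\<^sub>m\<^sub>+\<^sub>1 C R\<^sub>m = R\<^sub>m R\<^sub>m\<^sub>+\<^sub>1\<close>, by induction on \<open>m\<close>. Using this,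
  \<open>G(u, v) = (1 + v\<^sup>-\<^sup>1) u\<^sup>-\<^sup>1 (1 + v) u\<^sup>-\<^sup>1 + v\<^sup>-\<^sup>1 u\<^sup>2\<close> takes the same value \<open>G\<close> on all pairs
  \<open>(R\<^sub>2\<^sub>n, R\<^sub>2\<^sub>n\<^sub>+\<^sub>1)\<close>, and the even terms satisfy the linear recurrence
  \<open>u\<^sub>n\<^sub>+\<^sub>2 C = u\<^sub>n\<^sub>+\<^sub>1 G - u\<^sub>n\<close>. Conjugating by \<open>u\<^sub>0\<close>, the sequence \<open>u\<^sub>n u\<^sub>0\<^sup>-\<^sup>1\<close> satisfies
  a second-order linear recurrence; summing path weights according to the last step shows that
  the path sums satisfy the same recurrence, and both sequences start with \<open>1, y\<^sub>1\<close>.\<close>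

lemma inverse_cancel_left:
  fixes a :: "'a::division_ring"
  assumes "a \<noteq> 0"
  shows "a * (inverse a * z) = z" and "inverse a * (a * z) = z"
  using assms by (simp_all add: mult.assoc[symmetric])

lemma twisted_commute_step:
  fixes a b c C p :: "'a::division_ring"
  assumes ab: "a * C * b = b * a" and cb: "c * C * b = 1 + p" and ap: "a * p = p * a"
    and "b \<noteq> 0" "C \<noteq> 0"
  shows "c * C * a = a * c"
proof -
  have "(c * C * a - a * c) * (C * b) = c * C * (a * C * b) - a * (c * C * b)"
    by (simp add: algebra_simps)
  also have "\<dots> = c * C * (b * a) - a * (1 + p)"
    using ab cb by simp
  also have "\<dots> = (c * C * b) * a - a * (1 + p)"
    by (simp add: mult.assoc)
  also have "\<dots> = 0"
    using cb ap by (simp add: algebra_simps)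
  finally show ?thesis
    using assms(4,5) by simp
qed

lemma inverse_eq_of_twisted_commute:
  fixes a b C :: "'a::division_ring"
  assumes "a * C * b = b * a" "a \<noteq> 0" "b \<noteq> 0" "C \<noteq> 0"
  shows "inverse C = b * inverse a * inverse b * a"
proof (rule inverse_unique)
  have "C * b = inverse a * (b * a)"
    using assms by (metis inverse_cancel_left(2) mult.assoc)
  then show "C * (b * inverse a * inverse b * a) = 1"
    using assms by (simp add: mult.assoc[symmetric]) (simp add: mult.assoc inverse_cancel_left)
qed

definition recurrence_invariant :: "'a::division_ring \<Rightarrow> 'a \<Rightarrow> 'a" where
  "recurrence_invariant u v = (1 + inverse v) * inverse u * (1 + v) * inverse u + inverse v * u ^ 2"

lemma recurrence_invariant_linear_relation:
  fixes u v u' u\<^sub>0 v\<^sub>0 C :: "'a::division_ring"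
  assumes nz: "u \<noteq> 0" "v \<noteq> 0" "C \<noteq> 0"
    and step: "u' * C * u = 1 + v" and step\<^sub>0: "u * C * u\<^sub>0 = 1 + v\<^sub>0"
    and odd_step\<^sub>0: "v * C * v\<^sub>0 = 1 + u ^ 4"
    and comm: "v * C * u = u * v"
  shows "u * recurrence_invariant u v = u' * C + u\<^sub>0"
proof -
  have "u' * C = u' * C * u * inverse u"
    using nz by (simp add: mult.assoc)
  then have u'C: "u' * C = (1 + v) * inverse u"
    using step by simp
  have C_inv: "inverse C = u * inverse v * inverse u * v"
    using comm nz(2,1,3) by (rule inverse_eq_of_twisted_commute)
  have "u\<^sub>0 = inverse C * inverse u * (u * C * u\<^sub>0)"
    using nz by (simp add: mult.assoc inverse_cancel_left)
  then have u\<^sub>0_eq: "u\<^sub>0 = inverse C * inverse u * (1 + v\<^sub>0)"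
    using step\<^sub>0 by simp
  have "v\<^sub>0 = inverse C * inverse v * (v * C * v\<^sub>0)"
    using nz by (simp add: mult.assoc inverse_cancel_left)
  then have v\<^sub>0_eq: "v\<^sub>0 = inverse C * inverse v * (1 + u ^ 4)"
    using odd_step\<^sub>0 by simp
  have "u\<^sub>0 = u * inverse v * inverse u * v * inverse u
      * (1 + u * inverse v * inverse u * v * inverse v * (1 + u ^ 4))"
    using u\<^sub>0_eq v\<^sub>0_eq C_inv by simp
  then show ?thesis
    unfolding u'C recurrence_invariant_def using nz
    by (simp add: algebra_simps power2_eq_square power4_eq_xxxx inverse_cancel_left)
qed

lemma recurrence_invariant_via_successor:
  fixes u v w C :: "'a::division_ring"
  assumes nz: "u \<noteq> 0" "v \<noteq> 0" "w \<noteq> 0" "C \<noteq> 0"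
    and step: "w * C * u = 1 + v"
    and comm: "v * C * u = u * v" and comm': "w * C * v = v * w"
  shows "recurrence_invariant u v
    = w * w * inverse v + inverse w * (1 + v) * inverse w * (inverse v + 1)"
proof -
  have "w = w * C * u * inverse u * inverse C"
    using nz by (simp add: mult.assoc inverse_cancel_left)
  then have "w = (1 + v) * inverse u * (u * inverse v * inverse u * v)"
    using step inverse_eq_of_twisted_commute[OF comm nz(2,1,4)] by simp
  then have w_eq: "w = (1 + inverse v) * inverse u * v"
    using nz by (simp add: algebra_simps inverse_cancel_left)
  have "u = inverse C * inverse w * (w * C * u)"
    using nz by (simp add: mult.assoc inverse_cancel_left)
  then have "u = v * inverse w * inverse v * w * inverse w * (1 + v)"
    using step inverse_eq_of_twisted_commute[OF comm' nz(3,2,4)] by simp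
  then have u_eq: "u = v * inverse w * (inverse v + 1)"
    using nz by (simp add: algebra_simps inverse_cancel_left)
  have "1 + v = v * (1 + inverse v)"
    using nz by (simp add: algebra_simps)
  then have "(1 + inverse v) * inverse u * (1 + v) * inverse u
      = ((1 + inverse v) * inverse u * v) * ((1 + inverse v) * inverse u * v) * inverse v"
    using nz by (simp add: mult.assoc)
  also have "\<dots> = w * w * inverse v"
    using w_eq by simp
  finally have "(1 + inverse v) * inverse u * (1 + v) * inverse u = w * w * inverse v" .
  moreover have "inverse v * u ^ 2 = inverse w * (1 + v) * inverse w * (inverse v + 1)"
    using nz by (subst u_eq) (simp add: algebra_simps power2_eq_square inverse_cancel_left)
  ultimately show ?thesis
    unfolding recurrence_invariant_def by simp
qed

lemma recurrence_invariant_via_predecessor: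
  fixes v w v' C :: "'a::division_ring"
  assumes nz: "v \<noteq> 0" "w \<noteq> 0" "v' \<noteq> 0" "C \<noteq> 0"
    and odd_step: "v' * C * v = 1 + w ^ 4" and comm: "w * C * v = v * w"
  shows "recurrence_invariant w v'
    = w * w * inverse v + inverse w * (1 + v) * inverse w * (inverse v + 1)"
proof -
  have "v' = v' * C * v * inverse v * inverse C"
    using nz by (simp add: mult.assoc inverse_cancel_left)
  then have "v' = (1 + w ^ 4) * inverse v * (v * inverse w * inverse v * w)"
    using odd_step inverse_eq_of_twisted_commute[OF comm nz(2,1,4)] by simp
  then have v'_eq: "v' = (1 + w ^ 4) * inverse w * inverse v * w"
    using nz by (simp add: mult.assoc inverse_cancel_left)
  have "1 + w ^ 4 = v' * (inverse w * v * w)"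
    using nz by (subst v'_eq) (simp add: mult.assoc inverse_cancel_left)
  then have quartic: "inverse v' * (1 + w ^ 4) = inverse w * v * w"
    using nz by (simp add: mult.assoc[symmetric])
  have "inverse w * v' = (1 + w ^ 4) * (inverse w * inverse w * inverse v * w)"
    using nz by (subst v'_eq) (simp add: algebra_simps power4_eq_xxxx inverse_cancel_left)
  then have "inverse v' * inverse w * v' * inverse w
      = (inverse v' * (1 + w ^ 4)) * (inverse w * inverse w * inverse v * w) * inverse w"
    by (simp add: mult.assoc)
  also have "\<dots> = inverse w * v * inverse w * inverse v"
    unfolding quartic using nz by (simp add: mult.assoc inverse_cancel_left)
  finally have t1: "inverse v' * inverse w * v' * inverse w = inverse w * v * inverse w * inverse v" .
  have "inverse v' * inverse w * inverse w + inverse v' * w * w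
      = (inverse v' * (1 + w ^ 4)) * inverse w * inverse w"
    using nz by (simp add: algebra_simps power4_eq_xxxx inverse_cancel_left)
  also have "\<dots> = inverse w * v * inverse w"
    unfolding quartic using nz by (simp add: mult.assoc inverse_cancel_left)
  finally have t2: "inverse v' * inverse w * inverse w + inverse v' * w * w = inverse w * v * inverse w" .
  have t3: "inverse w * v' * inverse w = (inverse w * inverse w + w * w) * inverse v"
    using nz by (subst v'_eq) (simp add: algebra_simps power4_eq_xxxx inverse_cancel_left)
  have "recurrence_invariant w v' = inverse w * inverse w + inverse w * v' * inverse w
      + (inverse v' * inverse w * inverse w + inverse v' * w * w) + inverse v' * inverse w * v' * inverse w"
    unfolding recurrence_invariant_def by (simp add: algebra_simps power2_eq_square)
  then show ?thesis
    unfolding t1 t2 t3 using nz by (simp add: algebra_simps)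
qed

lemma recurrence_invariant_shift:
  fixes u v w v' C :: "'a::division_ring"
  assumes nz: "u \<noteq> 0" "v \<noteq> 0" "w \<noteq> 0" "v' \<noteq> 0" "C \<noteq> 0"
    and "w * C * u = 1 + v" "v' * C * v = 1 + w ^ 4"
    and "v * C * u = u * v" "w * C * v = v * w"
  shows "recurrence_invariant w v' = recurrence_invariant u v"
  using recurrence_invariant_via_successor[of u v w C] recurrence_invariant_via_predecessor[of v w v' C]
    assms by simp

locale central_embedding =
  fixes \<iota> :: "complex \<Rightarrow> 'a::division_ring"
  assumes iota_add: "\<iota> (a + b) = \<iota> a + \<iota> b"
    and iota_mult: "\<iota> (a * b) = \<iota> a * \<iota> b"
    and iota_one: "\<iota> 1 = 1"
    and iota_central: "\<iota> a * z = z * \<iota> a"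
begin

lemma iota_zero: "\<iota> 0 = 0"
  using iota_add[of 0 0] by simp

lemma iota_uminus: "\<iota> (- a) = - \<iota> a"
  using iota_add[of a "- a"] iota_zero by (simp add: eq_neg_iff_add_eq_0 add.commute)

lemma iota_inverse: "\<iota> (inverse a) = inverse (\<iota> a)"
proof (cases "a = 0")
  case True
  then show ?thesis by (simp add: iota_zero)
next
  case False
  then have "\<iota> a * \<iota> (inverse a) = 1"
    by (simp add: iota_mult[symmetric] iota_one)
  then show ?thesis by (rule inverse_unique[symmetric])
qed

text \<open>Since \<open>\<iota>\<close> is central, \<open>1 + t\<^sup>4 = (t\<^sup>2 - \<i>) (t\<^sup>2 + \<i>)\<close> splits into four linear factors
  \<open>t \<plusminus> \<iota> a\<close>, \<open>t \<plusminus> \<iota> b\<close> with \<open>a\<^sup>2 = \<i>\<close>, \<open>b\<^sup>2 = -\<i>\<close>, and a division ring has no zero divisors.\<close>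

lemma quartic_root_scalar:
  assumes "1 + t ^ 4 = 0"
  shows "t \<in> range \<iota>"
proof -
  have square_root: "\<exists>s. \<iota> s * \<iota> s = \<iota> c" for c :: complex
    using iota_mult[of "csqrt c" "csqrt c"] by (metis power2_csqrt power2_eq_square)
  have factor: "(t - \<iota> s) * (t + \<iota> s) = t * t - \<iota> s * \<iota> s" for s
  proof -
    have "(t - \<iota> s) * (t + \<iota> s) = t * t + t * \<iota> s - \<iota> s * t - \<iota> s * \<iota> s"
      by (simp add: algebra_simps)
    then show ?thesis
      by (simp add: iota_central[of s t])
  qed
  obtain a b where a: "\<iota> a * \<iota> a = \<iota> \<i>" and b: "\<iota> b * \<iota> b = - \<iota> \<i>"
    using square_root[of "\<i>"] square_root[of "- \<i>"] iota_uminus by metis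
  have "(t * t - \<iota> \<i>) * (t * t + \<iota> \<i>)
      = t * t * (t * t) + t * t * \<iota> \<i> - \<iota> \<i> * (t * t) - \<iota> \<i> * \<iota> \<i>"
    by (simp add: algebra_simps)
  also have "\<dots> = 1 + t ^ 4"
  proof -
    have "\<iota> \<i> * \<iota> \<i> = - 1"
      using iota_mult[of \<i> \<i>] iota_uminus[of 1] iota_one by simp
    then show ?thesis
      using iota_central[of \<i> "t * t"] by (simp add: power4_eq_xxxx mult.assoc)
  qed
  finally have "((t - \<iota> a) * (t + \<iota> a)) * ((t - \<iota> b) * (t + \<iota> b)) = 0"
    using assms by (simp add: factor a b)
  then have "t = \<iota> a \<or> t = - \<iota> a \<or> t = \<iota> b \<or> t = - \<iota> b"
    by (auto simp: eq_neg_iff_add_eq_0)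
  then show ?thesis
    by (metis iota_uminus rangeI)
qed

lemma twisted_sequence_nonzero:
  fixes u v :: "nat \<Rightarrow> 'a" and C :: 'a
  assumes even_step: "\<And>n. u (Suc n) * C * u n = 1 + v n"
    and odd_step: "\<And>n. v (Suc n) * C * v n = 1 + u (Suc n) ^ 4"
    and C_nonscalar: "C \<notin> range \<iota>" and "u 0 \<noteq> 0" "v 0 \<noteq> 0"
  shows "u n \<noteq> 0 \<and> v n \<noteq> 0"
proof -
  have "u (Suc n) \<noteq> 0" for n
  proof
    assume u0: "u (Suc n) = 0"
    then have "v n = - 1" "v (Suc n) = - 1"
      using even_step[of n] even_step[of "Suc n"] by (simp_all add: eq_neg_iff_add_eq_0 add.commute)
    then have "C = \<iota> 1"
      using odd_step[of n] u0 iota_one by (simp add: minus_equation_iff)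
    then show False
      using C_nonscalar by blast
  qed
  moreover have "v (Suc n) \<noteq> 0" for n
  proof
    assume v0: "v (Suc n) = 0"
    have "1 + u (Suc n) ^ 4 = 0" "1 + u (Suc (Suc n)) ^ 4 = 0"
      using odd_step[of n] odd_step[of "Suc n"] v0 by simp_all
    then obtain p q where p: "u (Suc n) = \<iota> p" and q: "u (Suc (Suc n)) = \<iota> q"
      using quartic_root_scalar by blast
    have "\<iota> q * C * \<iota> p = 1"
      using even_step[of "Suc n"] v0 by (simp add: p q)
    then have "C * \<iota> (q * p) = 1"
      by (simp add: iota_mult iota_central[of q C] mult.assoc)
    then have "inverse C = \<iota> (q * p)"
      by (rule inverse_unique)
    then have "C = \<iota> (inverse (q * p))"
      by (metis inverse_inverse_eq iota_inverse)
    then show False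
      using C_nonscalar by blast
  qed
  ultimately show ?thesis
    using assms(4,5) by (cases n) simp_all
qed

end

lemma full_matrix_1_const: "p \<noteq> (\<lambda>w. 0) \<Longrightarrow> full_matrix 1 (\<lambda>i j. p)"
  by (auto simp: full_matrix_def)

lemma invertible_over_1_nonzero: "invertible_over 1 (\<lambda>i j. a) \<Longrightarrow> a \<noteq> 0"
  by (auto simp: invertible_over_def)

lemma free_skew_field_central_embedding:
  "free_skew_field \<iota> x y \<Longrightarrow> central_embedding \<iota>"
  unfolding free_skew_field_def by unfold_locales blast+

lemma free_skew_field_nceval_nonzero:
  assumes "free_skew_field \<iota> x y" "is_ncpoly p" "p \<noteq> (\<lambda>w. 0)"
  shows "nceval \<iota> x y p \<noteq> 0"
proof -
  have "invertible_over 1 (\<lambda>i j. nceval \<iota> x y p)"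
    using assms full_matrix_1_const[of p] unfolding free_skew_field_def by auto
  then show ?thesis
    by (rule invertible_over_1_nonzero)
qed

lemma free_skew_field_not_q_commuting:
  assumes fsf: "free_skew_field \<iota> x y"
  shows "x * y \<noteq> \<iota> c * (y * x)"
proof -
  interpret central_embedding \<iota>
    using fsf by (rule free_skew_field_central_embedding)
  define p :: ncpoly where
    "p = (\<lambda>w. if w = [False, True] then 1 else if w = [True, False] then - c else 0)"
  have supp: "{w. p w \<noteq> 0} \<subseteq> {[False, True], [True, False]}"
    unfolding p_def by auto
  have "is_ncpoly p"
    unfolding is_ncpoly_def using supp by (rule finite_subset) simp
  moreover have "p \<noteq> (\<lambda>w. 0)"
    using fun_cong[of p "\<lambda>w. 0" "[False, True]"] unfolding p_def by auto
  ultimately have "nceval \<iota> x y p \<noteq> 0"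
    using fsf by (intro free_skew_field_nceval_nonzero)
  moreover have "nceval \<iota> x y p = (\<Sum>w\<in>{[False, True], [True, False]}. \<iota> (p w) * word_val x y w)"
    unfolding nceval_def using supp by (intro sum.mono_neutral_left) (auto simp: iota_zero)
  ultimately show ?thesis
    using iota_one iota_uminus[of c] by (simp add: p_def word_val_def)
qed

lemma free_skew_field_commutator_nonscalar:
  assumes fsf: "free_skew_field \<iota> x y"
  shows "x \<noteq> 0" and "y \<noteq> 0" and "x * y * inverse x * inverse y \<notin> range \<iota>"
proof -
  interpret central_embedding \<iota>
    using fsf by (rule free_skew_field_central_embedding)
  show x0: "x \<noteq> 0" and y0: "y \<noteq> 0"
    using free_skew_field_not_q_commuting[OF fsf, of 0] by (auto simp: iota_zero)
  show "x * y * inverse x * inverse y \<notin> range \<iota>"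
  proof
    assume "x * y * inverse x * inverse y \<in> range \<iota>"
    then obtain c where c: "x * y * inverse x * inverse y = \<iota> c" by blast
    have "x * y = x * y * inverse x * inverse y * (y * x)"
      using x0 y0 by (simp add: mult.assoc inverse_cancel_left)
    then have "x * y = \<iota> c * (y * x)"
      unfolding c .
    then show False
      using free_skew_field_not_q_commuting[OF fsf] by blast
  qed
qed

locale twisted_recurrence =
  fixes u v :: "nat \<Rightarrow> 'a::division_ring" and C :: 'a
  assumes even_step: "u (Suc n) * C * u n = 1 + v n"
    and odd_step: "v (Suc n) * C * v n = 1 + u (Suc n) ^ 4"
    and base_commute: "v 0 * C * u 0 = u 0 * v 0"
    and u_nonzero: "u n \<noteq> 0" and v_nonzero: "v n \<noteq> 0" and C_nonzero: "C \<noteq> 0"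
begin

lemma twisted_commute:
  "v n * C * u n = u n * v n \<and> u (Suc n) * C * v n = v n * u (Suc n)"
proof (induction n)
  case 0
  show ?case
    using twisted_commute_step[OF base_commute even_step refl u_nonzero C_nonzero] base_commute
    by simp
next
  case (Suc n)
  have "v (Suc n) * C * u (Suc n) = u (Suc n) * v (Suc n)"
    using conjunct2[OF Suc.IH] odd_step power_commutes[symmetric] v_nonzero C_nonzero
    by (rule twisted_commute_step)
  moreover from this have "u (Suc (Suc n)) * C * v (Suc n) = v (Suc n) * u (Suc (Suc n))"
    using even_step refl u_nonzero C_nonzero by (rule twisted_commute_step)
  ultimately show ?case ..
qed

lemma recurrence_invariant_const:
  "recurrence_invariant (u n) (v n) = recurrence_invariant (u 0) (v 0)"
proof (induction n)
  case (Suc n)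
  have "recurrence_invariant (u (Suc n)) (v (Suc n)) = recurrence_invariant (u n) (v n)"
    by (rule recurrence_invariant_shift[where C = C])
      (simp_all add: u_nonzero v_nonzero C_nonzero even_step odd_step twisted_commute)
  then show ?case
    using Suc.IH by simp
qed simp

lemma linear_recurrence:
  "u (Suc (Suc n)) * C = u (Suc n) * recurrence_invariant (u 0) (v 0) - u n"
proof -
  have "u (Suc n) * recurrence_invariant (u (Suc n)) (v (Suc n)) = u (Suc (Suc n)) * C + u n"
    by (rule recurrence_invariant_linear_relation[where C = C and v\<^sub>0 = "v n"])
      (simp_all add: u_nonzero v_nonzero C_nonzero even_step odd_step twisted_commute)
  then show ?thesis
    using recurrence_invariant_const[of "Suc n"] by (simp add: algebra_simps)
qed

end

definition motzkin1_paths_to :: "nat \<Rightarrow> nat \<Rightarrow> nat list set" where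
  "motzkin1_paths_to n e = {h. length h = n + 1 \<and> set h \<subseteq> {0, 1} \<and> h ! 0 = 0 \<and> h ! n = e}"

lemma motzkin1_paths_eq: "motzkin1_paths n = motzkin1_paths_to n 0"
  unfolding motzkin1_paths_def motzkin1_paths_to_def ..

lemma finite_motzkin1_paths_to: "finite (motzkin1_paths_to n e)"
proof (rule finite_subset)
  show "motzkin1_paths_to n e \<subseteq> {h. set h \<subseteq> {0, 1} \<and> length h = n + 1}"
    unfolding motzkin1_paths_to_def by auto
  show "finite {h. set h \<subseteq> {0::nat, 1} \<and> length h = n + 1}"
    by (rule finite_lists_length_eq) simp
qed

lemma motzkin1_paths_to_Suc:
  assumes "e \<in> {0, 1}"
  shows "motzkin1_paths_to (Suc n) e
    = (\<lambda>h. h @ [e]) ` (motzkin1_paths_to n 0 \<union> motzkin1_paths_to n 1)"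
proof
  show "motzkin1_paths_to (Suc n) e
      \<subseteq> (\<lambda>h. h @ [e]) ` (motzkin1_paths_to n 0 \<union> motzkin1_paths_to n 1)"
  proof
    fix h
    assume "h \<in> motzkin1_paths_to (Suc n) e"
    then have len: "length h = n + 2" and heights: "set h \<subseteq> {0, 1}"
      and start: "h ! 0 = 0" and finish: "h ! Suc n = e"
      unfolding motzkin1_paths_to_def by auto
    have snoc: "h = butlast h @ [e]"
      using len finish by (cases h rule: rev_cases) (auto simp: nth_append)
    have "length (butlast h) = n + 1" "set (butlast h) \<subseteq> {0, 1}" "butlast h ! 0 = 0"
      using len heights start by (auto simp: nth_butlast dest: in_set_butlastD)
    moreover from this have "butlast h ! n \<in> {0, 1}"
      by (metis less_add_one nth_mem subsetD)
    ultimately have "butlast h \<in> motzkin1_paths_to n 0 \<union> motzkin1_paths_to n 1"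
      unfolding motzkin1_paths_to_def by auto
    then show "h \<in> (\<lambda>h. h @ [e]) ` (motzkin1_paths_to n 0 \<union> motzkin1_paths_to n 1)"
      using snoc by blast
  qed
  show "(\<lambda>h. h @ [e]) ` (motzkin1_paths_to n 0 \<union> motzkin1_paths_to n 1)
      \<subseteq> motzkin1_paths_to (Suc n) e"
    unfolding motzkin1_paths_to_def using assms by (auto simp: nth_append)
qed

lemma path_weight_snoc:
  assumes "length h = n + 1"
  shows "path_weight y1 y2 y3 (h @ [e]) = path_weight y1 y2 y3 h * step_weight y1 1 y2 y3 (h ! n) e"
proof -
  define step where "step h i = step_weight y1 1 y2 y3 (h ! i) (h ! (i + 1))" for h i
  have "path_weight y1 y2 y3 (h @ [e]) = prod_list (map (step (h @ [e])) [0..<n]) * step (h @ [e]) n"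
    unfolding path_weight_def step_def using assms by simp
  also have "map (step (h @ [e])) [0..<n] = map (step h) [0..<n]"
    unfolding step_def using assms by (intro map_cong) (auto simp: nth_append)
  also have "step (h @ [e]) n = step_weight y1 1 y2 y3 (h ! n) e"
    unfolding step_def using assms by (simp add: nth_append)
  also have "prod_list (map (step h) [0..<n]) = path_weight y1 y2 y3 h"
    unfolding path_weight_def step_def using assms by simp
  finally show ?thesis .
qed

definition motzkin1_sum :: "'a::semiring_1 \<Rightarrow> 'a \<Rightarrow> 'a \<Rightarrow> nat \<Rightarrow> nat \<Rightarrow> 'a" where
  "motzkin1_sum y1 y2 y3 n e = (\<Sum>h\<in>motzkin1_paths_to n e. path_weight y1 y2 y3 h)"

lemma motzkin1_sum_Suc:
  assumes "e \<in> {0, 1}"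
  shows "motzkin1_sum y1 y2 y3 (Suc n) e
    = motzkin1_sum y1 y2 y3 n 0 * step_weight y1 1 y2 y3 0 e
      + motzkin1_sum y1 y2 y3 n 1 * step_weight y1 1 y2 y3 1 e"
proof -
  let ?P = "motzkin1_paths_to n"
  have "inj_on (\<lambda>h. h @ [e]) (?P 0 \<union> ?P 1)"
    by (auto simp: inj_on_def)
  then have "motzkin1_sum y1 y2 y3 (Suc n) e = (\<Sum>h\<in>?P 0 \<union> ?P 1. path_weight y1 y2 y3 (h @ [e]))"
    unfolding motzkin1_sum_def motzkin1_paths_to_Suc[OF assms] by (simp add: sum.reindex)
  also have "\<dots> = (\<Sum>h\<in>?P 0. path_weight y1 y2 y3 (h @ [e])) + (\<Sum>h\<in>?P 1. path_weight y1 y2 y3 (h @ [e]))"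
    by (rule sum.union_disjoint) (auto simp: finite_motzkin1_paths_to, auto simp: motzkin1_paths_to_def)
  also have "\<dots> = (\<Sum>h\<in>?P 0. path_weight y1 y2 y3 h * step_weight y1 1 y2 y3 0 e)
      + (\<Sum>h\<in>?P 1. path_weight y1 y2 y3 h * step_weight y1 1 y2 y3 1 e)"
    by (intro arg_cong2[where f = "(+)"] sum.cong) (auto simp: motzkin1_paths_to_def path_weight_snoc)
  finally show ?thesis
    unfolding motzkin1_sum_def by (simp add: sum_distrib_right)
qed

lemma motzkin1_sum_0: "motzkin1_sum y1 y2 y3 0 e = (if e = 0 then 1 else 0)"
proof -
  have "motzkin1_paths_to 0 e = (if e = 0 then {[0]} else {})"
    unfolding motzkin1_paths_to_def by (auto simp: length_Suc_conv)
  then show ?thesis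
    unfolding motzkin1_sum_def path_weight_def by simp
qed

lemma motzkin1_sum_recurrence:
  fixes y1 y2 y3 D E :: "'a::ring_1"
  assumes "y1 * y1 * D + y2 * D = y1 * E - 1" and "y2 * y1 * D + y3 * y2 * D = y2 * E"
  shows "motzkin1_sum y1 y2 y3 (Suc (Suc n)) 0 * D
    = motzkin1_sum y1 y2 y3 (Suc n) 0 * E - motzkin1_sum y1 y2 y3 n 0"
proof -
  let ?S = "\<lambda>n. motzkin1_sum y1 y2 y3 n 0" and ?T = "\<lambda>n. motzkin1_sum y1 y2 y3 n 1"
  have S_Suc: "?S (Suc n) = ?S n * y1 + ?T n * y2" and T_Suc: "?T (Suc n) = ?S n + ?T n * y3" for n
    using motzkin1_sum_Suc[of 0] motzkin1_sum_Suc[of 1] by (simp_all add: step_weight_def)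
  have "?S (Suc (Suc n)) * D = ?S n * (y1 * y1 * D + y2 * D) + ?T n * (y2 * y1 * D + y3 * y2 * D)"
    unfolding S_Suc T_Suc by (simp add: algebra_simps)
  also have "\<dots> = ?S (Suc n) * E - ?S n"
    unfolding assms by (simp add: S_Suc algebra_simps)
  finally show ?thesis .
qed

lemma second_order_recurrence_unique:
  fixes a b :: "nat \<Rightarrow> 'a::division_ring"
  assumes "D \<noteq> 0"
    and "\<And>n. a (Suc (Suc n)) * D = a (Suc n) * E - a n"
    and "\<And>n. b (Suc (Suc n)) * D = b (Suc n) * E - b n"
    and "a 0 = b 0" and "a 1 = b 1"
  shows "a n = b n"
proof -
  have "a n = b n \<and> a (Suc n) = b (Suc n)"
  proof (induction n)
    case (Suc n)
    then have "a (Suc (Suc n)) * D = b (Suc (Suc n)) * D"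
      using assms(2,3) by simp
    then show ?case
      using Suc assms(1) by simp
  qed (use assms(4,5) in simp)
  then show ?thesis ..
qed

lemma motzkin1_weight_identities:
  fixes x y :: "'a::division_ring"
  assumes x: "x \<noteq> 0" and y: "y \<noteq> 0"
  defines "u\<^sub>0 \<equiv> y * x * inverse y" and "C \<equiv> x * y * inverse x * inverse y"
    and "y1 \<equiv> (1 + y) * inverse x * y * inverse x * inverse y"
    and "y2 \<equiv> (x ^ 2 + (1 + y) * inverse x ^ 2 * (1 + y)) * inverse y * inverse x * y * inverse x * inverse y"
    and "y3 \<equiv> (x ^ 3 + (1 + y) * inverse x) * inverse x * inverse y"
  defines "D \<equiv> u\<^sub>0 * C * inverse u\<^sub>0" and "E \<equiv> u\<^sub>0 * recurrence_invariant u\<^sub>0 y * inverse u\<^sub>0"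
  shows "y1 * y1 * D + y2 * D = y1 * E - 1" and "y2 * y1 * D + y3 * y2 * D = y2 * E"
proof -
  have u\<^sub>0_inv: "inverse u\<^sub>0 = y * inverse x * inverse y"
    unfolding u\<^sub>0_def by (rule inverse_unique) (use x y in \<open>simp add: mult.assoc inverse_cancel_left\<close>)
  have "recurrence_invariant u\<^sub>0 y
      = (1 + y) * inverse x * (1 + y) * inverse x * inverse y + x * x * inverse y"
    unfolding recurrence_invariant_def u\<^sub>0_inv unfolding u\<^sub>0_def using x y
    by (simp add: algebra_simps power2_eq_square inverse_cancel_left)
  then have "E = y * x * inverse y * ((1 + y) * inverse x * (1 + y) * inverse x * inverse y + x * x * inverse y)
      * (y * inverse x * inverse y)"
    unfolding E_def u\<^sub>0_inv by (simp add: u\<^sub>0_def)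
  moreover have "D = y * x * inverse y * (x * y * inverse x * inverse y) * (y * inverse x * inverse y)"
    unfolding D_def u\<^sub>0_inv by (simp add: u\<^sub>0_def C_def)
  ultimately show "y1 * y1 * D + y2 * D = y1 * E - 1" and "y2 * y1 * D + y3 * y2 * D = y2 * E"
    unfolding y1_def y2_def y3_def using x y
    by (simp_all add: algebra_simps power2_eq_square power3_eq_cube inverse_cancel_left)
qed

lemma normalised_sequence_eq_motzkin1_sum:
  fixes x y :: "'a::division_ring" and u :: "nat \<Rightarrow> 'a"
  assumes x: "x \<noteq> 0" and y: "y \<noteq> 0"
  defines "C \<equiv> x * y * inverse x * inverse y"
    and "y1 \<equiv> (1 + y) * inverse x * y * inverse x * inverse y"
    and "y2 \<equiv> (x ^ 2 + (1 + y) * inverse x ^ 2 * (1 + y)) * inverse y * inverse x * y * inverse x * inverse y"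
    and "y3 \<equiv> (x ^ 3 + (1 + y) * inverse x) * inverse x * inverse y"
  assumes u\<^sub>0: "u 0 = y * x * inverse y" and u\<^sub>1: "u 1 * C * u 0 = 1 + y"
    and recurrence: "\<And>n. u (Suc (Suc n)) * C = u (Suc n) * recurrence_invariant (u 0) y - u n"
  shows "u n * inverse (u 0) = motzkin1_sum y1 y2 y3 n 0"
proof -
  define D where "D = u 0 * C * inverse (u 0)"
  define E where "E = u 0 * recurrence_invariant (u 0) y * inverse (u 0)"
  have u\<^sub>0_nz: "u 0 \<noteq> 0" and C_nz: "C \<noteq> 0"
    using x y by (simp_all add: u\<^sub>0 C_def)
  have normalised: "u (Suc (Suc n)) * inverse (u 0) * D
      = u (Suc n) * inverse (u 0) * E - u n * inverse (u 0)" for n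
  proof -
    have "u (Suc (Suc n)) * inverse (u 0) * D = u (Suc (Suc n)) * C * inverse (u 0)"
      unfolding D_def using u\<^sub>0_nz by (simp add: mult.assoc inverse_cancel_left)
    also have "\<dots> = (u (Suc n) * recurrence_invariant (u 0) y - u n) * inverse (u 0)"
      unfolding recurrence ..
    also have "\<dots> = u (Suc n) * inverse (u 0) * E - u n * inverse (u 0)"
      unfolding E_def using u\<^sub>0_nz by (simp add: mult.assoc inverse_cancel_left left_diff_distrib)
    finally show ?thesis .
  qed
  have paths: "motzkin1_sum y1 y2 y3 (Suc (Suc n)) 0 * D
      = motzkin1_sum y1 y2 y3 (Suc n) 0 * E - motzkin1_sum y1 y2 y3 n 0" for n
    using motzkin1_weight_identities[OF x y] unfolding D_def E_def u\<^sub>0 C_def y1_def y2_def y3_def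
    by (rule motzkin1_sum_recurrence)
  have "u 1 = u 1 * (C * u 0) * inverse (C * u 0)"
    using u\<^sub>0_nz C_nz by (metis mult.assoc mult_1_right no_zero_divisors right_inverse)
  also have "\<dots> = (1 + y) * inverse (C * u 0)"
    by (simp only: mult.assoc[symmetric] u\<^sub>1)
  finally have "u 1 * inverse (u 0) = (1 + y) * inverse (u 0) * inverse C * inverse (u 0)"
    using u\<^sub>0_nz C_nz by (simp add: nonzero_inverse_mult_distrib mult.assoc)
  also have "\<dots> = y1"
    unfolding y1_def u\<^sub>0 C_def using x y
    by (simp add: nonzero_inverse_mult_distrib mult.assoc inverse_cancel_left)
  also have "y1 = motzkin1_sum y1 y2 y3 1 0"
    using motzkin1_sum_Suc[of 0 y1 y2 y3 0] by (simp add: motzkin1_sum_0 step_weight_def)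
  finally have initial: "u 1 * inverse (u 0) = motzkin1_sum y1 y2 y3 1 0" .
  have "D \<noteq> 0"
    unfolding D_def using u\<^sub>0_nz C_nz by simp
  then show ?thesis
    by (rule second_order_recurrence_unique[where a = "\<lambda>n. u n * inverse (u 0)"
          and b = "\<lambda>n. motzkin1_sum y1 y2 y3 n 0" and E = E])
      (use normalised paths initial u\<^sub>0_nz in \<open>simp_all add: motzkin1_sum_0\<close>)
qed

lemma alternating_recurrence_nat:
  fixes R :: "int \<Rightarrow> 'a::ring_1"
  assumes "\<forall>n. R (2*n) * C * R (2*n - 2) = 1 + R (2*n - 1)"
    and "\<forall>n. R (2*n + 1) * C * R (2*n - 1) = 1 + R (2*n) ^ 4"
  shows "R (2 * int (Suc n)) * C * R (2 * int n) = 1 + R (2 * int n + 1)"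
    and "R (2 * int (Suc n) + 1) * C * R (2 * int n + 1) = 1 + R (2 * int (Suc n)) ^ 4"
  using assms[rule_format, of "int (Suc n)"] by (simp_all add: algebra_simps)

theorem theorem4p5:
  fixes \<iota> :: "complex \<Rightarrow> 'a::division_ring" and x y :: 'a and R :: "int \<Rightarrow> 'a"
  assumes "free_skew_field \<iota> x y"
    and "\<forall>n. R (2*n) * (x * y * inverse x * inverse y) * R (2*n - 2) = 1 + R (2*n - 1)"
    and "\<forall>n. R (2*n + 1) * (x * y * inverse x * inverse y) * R (2*n - 1) = 1 + R (2*n) ^ 4"
    and "R 0 = y * x * inverse y"
    and "R 1 = y"
  shows "\<forall>n::nat. R (2 * int n) * inverse (R 0) =
     (\<Sum>h\<in>motzkin1_paths n.
        path_weight
          ((1 + y) * inverse x * y * inverse x * inverse y)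
          ((x ^ 2 + (1 + y) * inverse x ^ 2 * (1 + y)) * inverse y * inverse x * y * inverse x * inverse y)
          ((x ^ 3 + (1 + y) * inverse x) * inverse x * inverse y)
          h)"
proof -
  interpret central_embedding \<iota>
    using assms(1) by (rule free_skew_field_central_embedding)
  define C where "C = x * y * inverse x * inverse y"
  define u where "u n = R (2 * int n)" for n
  define v where "v n = R (2 * int n + 1)" for n
  have x: "x \<noteq> 0" and y: "y \<noteq> 0" and C_nonscalar: "C \<notin> range \<iota>"
    using free_skew_field_commutator_nonscalar[OF assms(1)] by (simp_all add: C_def)
  have even_step: "u (Suc n) * C * u n = 1 + v n"
    and odd_step: "v (Suc n) * C * v n = 1 + u (Suc n) ^ 4" for n
    using alternating_recurrence_nat[OF assms(2,3)[folded C_def]] by (simp_all add: u_def v_def)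
  have u\<^sub>0: "u 0 = y * x * inverse y" and v\<^sub>0: "v 0 = y"
    using assms(4,5) by (simp_all add: u_def v_def)
  have "u n \<noteq> 0 \<and> v n \<noteq> 0" for n
    using twisted_sequence_nonzero[where u = u and v = v, OF even_step odd_step C_nonscalar] x y
    by (simp add: u\<^sub>0 v\<^sub>0)
  moreover have "v 0 * C * u 0 = u 0 * v 0"
    unfolding u\<^sub>0 v\<^sub>0 C_def using x y by (simp add: mult.assoc inverse_cancel_left)
  moreover have "C \<noteq> 0"
    using C_nonscalar iota_zero by force
  ultimately interpret twisted_recurrence u v C
    using even_step odd_step by unfold_locales simp_all
  have "u n * inverse (u 0) = motzkin1_sum
      ((1 + y) * inverse x * y * inverse x * inverse y)
      ((x ^ 2 + (1 + y) * inverse x ^ 2 * (1 + y)) * inverse y * inverse x * y * inverse x * inverse y)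
      ((x ^ 3 + (1 + y) * inverse x) * inverse x * inverse y) n 0" for n
    using normalised_sequence_eq_motzkin1_sum[OF x y, of u] even_step[of 0] linear_recurrence
    unfolding u\<^sub>0 v\<^sub>0 C_def by simp
  then show ?thesis
    by (simp add: u_def motzkin1_paths_eq motzkin1_sum_def)
qed

end
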